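(* Let $m\ge1$ and let $f$ be a non-zero continuous function on $S^m$. Then for every $\delta>0$ there exist positive integers $n$ and $N$, points $y_1,\dots,y_N\in S^m$, and real numbers $c_1,\dots,c_N$ such that $$\max_{x\in S^m}\Big|f(x)-\sum_{k=1}^N c_kK_n(\langle x,y_k\rangle)\Big|<\delta,$$ where $K_n(t)=c_{m+1}(n)e^{nt}$ for $t\in[-1,1]$.
   Context: $S^m=\{x\in\mathbb{R}^{m+1}:\|x\|_2=1\}$ and $\langle\cdot,\cdot\rangle$ is the standard inner product on $\mathbb{R}^{m+1}$. For $\kappa>0$, $c_{m+1}(\kappa)=\dfrac{\kappa^{\frac{m+1}{2}-1}}{(2\pi)^{\frac{m+1}{2}} I_{\frac{m+1}{2}-1}(\kappa)}$, where $I_v$ is the modified Bessel function of the first kind of order $v$ (the normalizing constant of the von Mises–Fisher density on $S^m$ with respect to surface measure). *)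

theory Defs
  imports "HOL-Analysis.Analysis"
begin

definition besselI :: "real \<Rightarrow> real \<Rightarrow> real" where
  "besselI v x = (\<Sum>k. (x / 2) powr (2 * real k + v) / (fact k * Gamma (real k + v + 1)))"

definition vmf_const :: "nat \<Rightarrow> real \<Rightarrow> real" where
  "vmf_const d \<kappa> = \<kappa> powr (real d / 2 - 1) /
     ((2 * pi) powr (real d / 2) * besselI (real d / 2 - 1) \<kappa>)"

text \<open>K_n(t) = c_{m+1}(n) e^{n t}, where d = m+1 is the ambient dimension.\<close>
definition vmf_kernel :: "nat \<Rightarrow> nat \<Rightarrow> real \<Rightarrow> real" where
  "vmf_kernel d n t = vmf_const d (real n) * exp (real n * t)"

end

theory Submission
  imports Defs
begin

(* Average f over the sphere against the weights exp(n(<x,u> - 1)), which concentrate at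
   u = x as n grows.  To work with Lebesgue measure instead of surface measure, the average is
   taken over R^d with the density annulus_bump |z| * exp(n(<x, z/|z|> - 1)), supported in the
   shell 1 <= |z| <= 2.  Far from the ray through x the density is at most exp(-n eta^2/2),
   while its total mass is at least c exp(-2 n rho) (from a small ball around 3/2 x); hence
   the normalised average tends to f(x) uniformly in x.  By rotation invariance the total mass
   does not depend on x, so a Riemann sum of the integral over one tagged division of a cube
   is a combination of the functions exp(n <x, t/|t|>) with coefficients independent of x.
   Dividing by the von Mises-Fisher constant, which is positive, gives the kernels K_n. *)

lemma integral_UNIV_eq_cbox:
  fixes \<phi> :: "'a::euclidean_space \<Rightarrow> real"
  assumes "continuous_on UNIV \<phi>" "\<And>z. z \<notin> cbox a b \<Longrightarrow> \<phi> z = 0"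
  shows "\<phi> integrable_on UNIV" "integral UNIV \<phi> = integral (cbox a b) \<phi>"
proof -
  have "\<phi> integrable_on cbox a b"
    using assms(1) by (auto intro: integrable_continuous continuous_on_subset)
  then show "\<phi> integrable_on UNIV"
    using assms(2) by (rule integrable_on_superset) auto
  have "integral UNIV \<phi> = integral UNIV (\<lambda>z. if z \<in> cbox a b then \<phi> z else 0)"
    using assms(2) by (intro integral_cong) auto
  then show "integral UNIV \<phi> = integral (cbox a b) \<phi>"
    by (simp add: integral_restrict_UNIV)
qed

lemma integral_comp_orthogonal_transformation:
  fixes h :: "real^'n::{finite,wellorder} \<Rightarrow> real" and Q :: "real^'n::_ \<Rightarrow> real^'n::_"
  assumes "h integrable_on UNIV" "\<And>z. 0 \<le> h z" "orthogonal_transformation Q"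
  shows "integral UNIV (\<lambda>z. h (Q z)) = integral UNIV h"
proof -
  have Qinv: "orthogonal_transformation (inv Q)"
    using assms(3) by (rule orthogonal_transformation_inv)
  have inv_Q: "inv Q (Q x) = x" "Q (inv Q x) = x" for x
    using assms(3) orthogonal_transformation_bij bij_inv_eq_iff by metis+
  have "((\<lambda>x. \<bar>det (matrix Q)\<bar> * h (Q x)) has_integral integral UNIV h) UNIV
         \<longleftrightarrow> (h has_integral integral UNIV h) UNIV"
    using assms(2) inv_Q orthogonal_transformation_linear[OF assms(3)]
      orthogonal_transformation_linear[OF Qinv]
    by (intro cov_invertible_nonneg_eq[where g'="\<lambda>_. Q" and h'="\<lambda>_. inv Q" and h="inv Q"])
       (auto simp: linear_imp_has_derivative fun_eq_iff)
  then have "((\<lambda>x. h (Q x)) has_integral integral UNIV h) UNIV"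
    using assms(1,3) by (simp add: integrable_integral)
  then show ?thesis
    by (rule integral_unique)
qed

lemma integral_cbox_deviation_bound:
  fixes g :: "'a::euclidean_space \<Rightarrow> real"
  assumes "g integrable_on cbox u v" "\<And>z. z \<in> cbox u v \<Longrightarrow> \<bar>g z - c\<bar> \<le> \<epsilon>" "0 \<le> \<epsilon>"
  shows "\<bar>integral (cbox u v) g - measure lborel (cbox u v) * c\<bar> \<le> \<epsilon> * measure lborel (cbox u v)"
proof -
  have "integral (cbox u v) (\<lambda>z. g z - c) = integral (cbox u v) g - measure lborel (cbox u v) * c"
    using integral_diff[OF assms(1) integrable_const, of c] by (simp add: mult.commute)
  moreover have "norm (integral (cbox u v) (\<lambda>z. g z - c)) \<le> \<epsilon> * measure lborel (cbox u v)"
    using integrable_diff[OF assms(1) integrable_const, of c] assms(2,3)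
    by (intro has_integral_bound[OF _ integrable_integral]) auto
  ultimately show ?thesis
    by simp
qed

lemma riemann_sum_error_fine_division:
  fixes h :: "'a::euclidean_space \<Rightarrow> real"
  assumes h: "h integrable_on cbox a b"
    and p: "p tagged_division_of cbox a b" and fine: "(\<lambda>t. ball t \<delta>) fine p"
    and osc: "\<And>z t. z \<in> cbox a b \<Longrightarrow> t \<in> cbox a b \<Longrightarrow> dist z t < \<delta> \<Longrightarrow> \<bar>h z - h t\<bar> \<le> \<epsilon>"
    and "0 \<le> \<epsilon>"
  shows "\<bar>integral (cbox a b) h - (\<Sum>(t, K)\<in>p. measure lborel K * h t)\<bar> \<le> \<epsilon> * measure lborel (cbox a b)"
proof -
  have cell: "\<bar>integral K h - measure lborel K * h t\<bar> \<le> \<epsilon> * measure lborel K" if tK: "(t, K) \<in> p" for t K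
  proof -
    obtain u v where K: "K = cbox u v"
      using tagged_division_ofD(4)[OF p tK] by blast
    have "t \<in> K" "K \<subseteq> cbox a b" "K \<subseteq> ball t \<delta>"
      using tagged_division_ofD(2,3)[OF p tK] fine tK by (auto simp: fine_def)
    then show ?thesis
      using integrable_on_subcbox[OF h] osc \<open>0 \<le> \<epsilon>\<close> unfolding K
      by (intro integral_cbox_deviation_bound) (auto simp: dist_commute subset_iff)
  qed
  have "integral (cbox a b) h - (\<Sum>(t, K)\<in>p. measure lborel K * h t)
      = (\<Sum>(t, K)\<in>p. integral K h - measure lborel K * h t)"
    using integral_combine_tagged_division_topdown[OF h p] by (simp add: sum_subtractf case_prod_unfold)
  also have "\<bar>\<dots>\<bar> \<le> (\<Sum>(t, K)\<in>p. \<epsilon> * measure lborel K)"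
    using cell by (intro order_trans[OF sum_abs sum_mono]) auto
  also have "\<dots> = \<epsilon> * measure lborel (cbox a b)"
    using additive_content_tagged_division[OF p] by (simp add: case_prod_unfold flip: sum_distrib_left)
  finally show ?thesis .
qed

lemma uniform_riemann_sum_approximation:
  fixes g :: "'a::metric_space \<times> 'b::euclidean_space \<Rightarrow> real"
  assumes S: "compact S" and g: "continuous_on (S \<times> cbox a b) g" and "0 < \<epsilon>"
  obtains p where "p tagged_division_of cbox a b"
    "\<And>x. x \<in> S \<Longrightarrow>
      \<bar>integral (cbox a b) (\<lambda>z. g (x, z)) - (\<Sum>(t, K)\<in>p. measure lborel K * g (x, t))\<bar> \<le> \<epsilon>"
proof -
  define \<epsilon>' where "\<epsilon>' = \<epsilon> / (measure lborel (cbox a b) + 1)"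
  have "0 < measure lborel (cbox a b) + 1"
    using measure_nonneg[of lborel "cbox a b"] by linarith
  then have \<epsilon>': "0 < \<epsilon>'" "\<epsilon>' * measure lborel (cbox a b) \<le> \<epsilon>"
    using \<open>0 < \<epsilon>\<close> by (auto simp: \<epsilon>'_def field_simps)
  have "uniformly_continuous_on (S \<times> cbox a b) g"
    using S g by (intro compact_uniformly_continuous compact_Times) auto
  then obtain \<delta> where "0 < \<delta>" and \<delta>: "\<And>u v. u \<in> S \<times> cbox a b \<Longrightarrow> v \<in> S \<times> cbox a b \<Longrightarrow>
      dist v u < \<delta> \<Longrightarrow> dist (g v) (g u) < \<epsilon>'"
    unfolding uniformly_continuous_on_def using \<epsilon>'(1) by metis
  obtain p where p: "p tagged_division_of cbox a b" and fine: "(\<lambda>t. ball t \<delta>) fine p"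
    using fine_division_exists[OF gauge_ball[OF \<open>0 < \<delta>\<close>]] by metis
  have "\<bar>integral (cbox a b) (\<lambda>z. g (x, z)) - (\<Sum>(t, K)\<in>p. measure lborel K * g (x, t))\<bar>
      \<le> \<epsilon>' * measure lborel (cbox a b)" if x: "x \<in> S" for x
  proof (rule riemann_sum_error_fine_division[OF _ p fine])
    show "(\<lambda>z. g (x, z)) integrable_on cbox a b"
      using x by (intro integrable_continuous continuous_on_compose2[OF g]) (auto intro: continuous_intros)
    show "\<bar>g (x, z) - g (x, t)\<bar> \<le> \<epsilon>'" if "z \<in> cbox a b" "t \<in> cbox a b" "dist z t < \<delta>" for z t
      using \<delta>[of "(x, t)" "(x, z)"] x that by (simp add: dist_Pair_Pair dist_real_def)
  qed (use \<epsilon>' in simp)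
  then show thesis
    using p that \<epsilon>'(2) by fastforce
qed

lemma power2_dist_unit_vectors:
  fixes u x :: "'a::real_inner"
  assumes "norm u = 1" "norm x = 1"
  shows "(dist u x)\<^sup>2 = 2 - 2 * (x \<bullet> u)"
proof -
  have "(dist u x)\<^sup>2 = u \<bullet> u - 2 * (x \<bullet> u) + x \<bullet> x"
    by (simp add: dist_norm power2_norm_eq_inner inner_diff_left inner_diff_right inner_commute)
  then show ?thesis
    using assms by (simp add: dot_square_norm)
qed

lemma exp_inner_unit_vectors_le:
  fixes u x :: "'a::real_inner"
  assumes "norm u = 1" "norm x = 1" "0 \<le> \<eta>" "\<eta> \<le> dist u x"
  shows "exp (real n * (x \<bullet> u - 1)) \<le> exp (- real n * \<eta>\<^sup>2 / 2)"
proof -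
  have "\<eta>\<^sup>2 \<le> (dist u x)\<^sup>2"
    using assms(3,4) by (simp add: power_mono)
  then have "x \<bullet> u - 1 \<le> - \<eta>\<^sup>2 / 2"
    using power2_dist_unit_vectors[OF assms(1,2)] by simp
  then have "real n * (x \<bullet> u - 1) \<le> real n * (- \<eta>\<^sup>2 / 2)"
    by (rule mult_left_mono) simp
  then show ?thesis
    by simp
qed

section \<open>The annulus kernel\<close>

definition annulus_bump :: "real \<Rightarrow> real" where
  "annulus_bump s = max 0 (1/2 - \<bar>s - 3/2\<bar>)"

definition annulus_kernel :: "nat \<Rightarrow> 'a::real_inner \<Rightarrow> 'a \<Rightarrow> real" where
  "annulus_kernel n x z = annulus_bump (norm z) * exp (real n * (x \<bullet> sgn z - 1))"

lemma annulus_bump_nonneg: "0 \<le> annulus_bump s"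
  by (simp add: annulus_bump_def)

lemma annulus_bump_eq_0: "s \<le> 1 \<or> 2 \<le> s \<Longrightarrow> annulus_bump s = 0"
  by (auto simp: annulus_bump_def)

lemma annulus_bump_lower: "1/2 - \<bar>s - 3/2\<bar> \<le> annulus_bump s"
  by (simp add: annulus_bump_def)

lemma continuous_on_annulus_bump: "continuous_on A annulus_bump"
  unfolding annulus_bump_def by (intro continuous_intros)

lemma annulus_bump_norm_eq_0_outside_cube:
  fixes z :: "'a::euclidean_space"
  assumes "z \<notin> cbox (- (2 *\<^sub>R One)) (2 *\<^sub>R One)"
  shows "annulus_bump (norm z) = 0"
proof -
  obtain b where "b \<in> Basis" "2 < \<bar>z \<bullet> b\<bar>"
    using assms by (auto simp: mem_box)
  then have "2 \<le> norm z"
    using Basis_le_norm[of b z] by linarith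
  then show ?thesis
    by (simp add: annulus_bump_eq_0)
qed

lemma annulus_kernel_nonneg: "0 \<le> annulus_kernel n x z"
  by (simp add: annulus_kernel_def annulus_bump_nonneg)

lemma annulus_kernel_orthogonal_transformation:
  assumes "orthogonal_transformation Q"
  shows "annulus_kernel n (Q x) (Q z) = annulus_kernel n x z"
proof -
  have "sgn (Q z) = Q (sgn z)"
    using assms by (simp add: sgn_div_norm orthogonal_transformation_scaleR orthogonal_transformation_norm)
  then show ?thesis
    using assms by (simp add: annulus_kernel_def orthogonal_transformation_norm orthogonal_transformation_def)
qed

lemma continuous_on_annulus_kernel_pair:
  fixes f :: "'a::real_inner \<Rightarrow> real"
  assumes "continuous_on (sphere 0 1) f"
  shows "continuous_on UNIV (\<lambda>p. f (sgn (snd p)) * annulus_kernel n (fst p) (snd p))"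
proof -
  let ?g = "\<lambda>p. f (sgn (snd p)) * annulus_kernel n (fst p) (snd p)"
  have "continuous_on (UNIV \<times> - ball 0 (1/2)) (\<lambda>p::'a \<times> 'a. sgn (snd p))"
    by (intro continuous_intros) auto
  then have "continuous_on (UNIV \<times> - ball 0 (1/2)) ?g"
    unfolding annulus_kernel_def
    by (intro continuous_intros continuous_on_compose2[OF assms]
        continuous_on_compose2[OF continuous_on_annulus_bump]) (auto simp: norm_sgn)
  moreover have "continuous_on (UNIV \<times> cball 0 1) ?g"
    by (rule continuous_on_eq[of _ "\<lambda>_. 0"]) (auto simp: annulus_kernel_def annulus_bump_eq_0)
  moreover have "UNIV = UNIV \<times> - ball (0::'a) (1/2) \<union> UNIV \<times> cball 0 1"
    by auto
  ultimately show ?thesis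
    using continuous_on_closed_Un[of "UNIV \<times> - ball (0::'a) (1/2)" "UNIV \<times> cball 0 1" ?g]
    by (metis closed_Compl closed_Times closed_UNIV closed_cball open_ball)
qed

lemma continuous_on_annulus_kernel_section:
  fixes f :: "'a::real_inner \<Rightarrow> real"
  assumes "continuous_on (sphere 0 1) f"
  shows "continuous_on UNIV (\<lambda>z. f (sgn z) * annulus_kernel n x z)"
proof -
  have "continuous_on UNIV (\<lambda>z. (\<lambda>p. f (sgn (snd p)) * annulus_kernel n (fst p) (snd p)) (x, z))"
    by (rule continuous_on_compose2[OF continuous_on_annulus_kernel_pair[OF assms]])
       (auto intro: continuous_intros)
  then show ?thesis
    by simp
qed

lemma
  fixes f :: "'a::euclidean_space \<Rightarrow> real"
  assumes "continuous_on (sphere 0 1) f"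
  shows integrable_annulus_kernel_section:
      "(\<lambda>z. f (sgn z) * annulus_kernel n x z) integrable_on UNIV"
    and integral_annulus_kernel_section_cube:
      "integral UNIV (\<lambda>z. f (sgn z) * annulus_kernel n x z)
        = integral (cbox (- (2 *\<^sub>R One)) (2 *\<^sub>R One)) (\<lambda>z. f (sgn z) * annulus_kernel n x z)"
proof -
  have "f (sgn z) * annulus_kernel n x z = 0" if "z \<notin> cbox (- (2 *\<^sub>R One)) (2 *\<^sub>R One)" for z
    using that by (simp add: annulus_kernel_def annulus_bump_norm_eq_0_outside_cube)
  then show "(\<lambda>z. f (sgn z) * annulus_kernel n x z) integrable_on UNIV"
    and "integral UNIV (\<lambda>z. f (sgn z) * annulus_kernel n x z)
        = integral (cbox (- (2 *\<^sub>R One)) (2 *\<^sub>R One)) (\<lambda>z. f (sgn z) * annulus_kernel n x z)"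
    using integral_UNIV_eq_cbox[OF continuous_on_annulus_kernel_section[OF assms]] by blast+
qed

lemma integrable_annulus_kernel: "(annulus_kernel n x :: 'a::euclidean_space \<Rightarrow> real) integrable_on UNIV"
  using integrable_annulus_kernel_section[of "\<lambda>_. 1"] by simp

lemma integrable_annulus_bump_norm: "(\<lambda>z::'a::euclidean_space. annulus_bump (norm z)) integrable_on UNIV"
  using integrable_annulus_kernel[of 0] unfolding annulus_kernel_def by simp

lemma integral_annulus_kernel_sphere_invariant:
  fixes x e :: "real^'n::{finite,wellorder}"
  assumes "norm x = 1" "norm e = 1"
  shows "integral UNIV (annulus_kernel n x) = integral UNIV (annulus_kernel n e)"
proof -
  obtain Q where Q: "orthogonal_transformation Q" "Q e = x"
    using orthogonal_transformation_exists[of e x] assms by auto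
  have "annulus_kernel n e = (\<lambda>z. annulus_kernel n x (Q z))"
    using annulus_kernel_orthogonal_transformation[OF Q(1)] Q(2) by metis
  then have "integral UNIV (annulus_kernel n e) = integral UNIV (\<lambda>z. annulus_kernel n x (Q z))"
    by simp
  also have "\<dots> = integral UNIV (annulus_kernel n x)"
    by (intro integral_comp_orthogonal_transformation Q(1) integrable_annulus_kernel annulus_kernel_nonneg)
  finally show ?thesis ..
qed

lemma annulus_kernel_lower_bound_near_peak:
  fixes e z :: "'a::real_inner"
  assumes e: "norm e = 1" and \<rho>: "0 < \<rho>" "\<rho> \<le> 1/8"
    and z: "z \<in> cball ((3/2) *\<^sub>R e) \<rho>"
  shows "exp (- 2 * real n * \<rho>) / 4 \<le> annulus_kernel n e z"
proof -
  let ?w = "z - (3/2) *\<^sub>R e"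
  have w: "norm ?w \<le> \<rho>"
    using z by (simp add: dist_norm norm_minus_commute)
  have "\<bar>norm z - 3/2\<bar> \<le> \<rho>"
    using norm_triangle_ineq3[of z "(3/2) *\<^sub>R e"] w e by simp
  then have bump: "1/4 \<le> annulus_bump (norm z)" and z: "0 < norm z" "norm z \<le> 3/2 + \<rho>"
    using annulus_bump_lower[of "norm z"] \<rho> by linarith+
  have "\<bar>e \<bullet> ?w\<bar> \<le> \<rho>"
    using Cauchy_Schwarz_ineq2[of e ?w] e w by simp
  moreover have "e \<bullet> z = 3/2 + e \<bullet> ?w"
    using e by (simp add: inner_diff_right dot_square_norm)
  moreover have "(1 - 2 * \<rho>) * norm z \<le> (1 - 2 * \<rho>) * (3/2 + \<rho>)"
    using z \<rho> by (intro mult_left_mono) auto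
  moreover have "(1 - 2 * \<rho>) * (3/2 + \<rho>) = 3/2 - 2 * \<rho> - 2 * \<rho>\<^sup>2"
    by (simp add: field_simps power2_eq_square)
  ultimately have "(1 - 2 * \<rho>) * norm z \<le> e \<bullet> z"
    using zero_le_power2[of \<rho>] by linarith
  then have "1 - 2 * \<rho> \<le> e \<bullet> sgn z"
    using z by (simp add: sgn_div_norm inner_scaleR_right field_simps)
  then have "real n * (- 2 * \<rho>) \<le> real n * (e \<bullet> sgn z - 1)"
    by (intro mult_left_mono) auto
  then have "1/4 * exp (- 2 * real n * \<rho>) \<le> annulus_bump (norm z) * exp (real n * (e \<bullet> sgn z - 1))"
    using bump by (intro mult_mono) auto
  then show ?thesis
    by (simp add: annulus_kernel_def)
qed

lemma integral_annulus_kernel_lower_bound: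
  fixes e :: "'a::euclidean_space"
  assumes e: "norm e = 1" and \<rho>: "0 < \<rho>" "\<rho> \<le> 1/8"
  shows "measure lborel (cball (0::'a) \<rho>) / 4 * exp (- 2 * real n * \<rho>) \<le> integral UNIV (annulus_kernel n e)"
proof -
  let ?B = "cball ((3/2) *\<^sub>R e) \<rho>"
  let ?m = "exp (- 2 * real n * \<rho>) / 4"
  have "measure lborel (cball (0::'a) \<rho>) / 4 * exp (- 2 * real n * \<rho>) = integral UNIV (\<lambda>z. ?m * indicator ?B z)"
    using content_cball[of \<rho> 0] content_cball[of \<rho> "(3/2) *\<^sub>R e"] \<rho>
    by (simp add: integral_mult_right integral_indicator)
  also have "\<dots> \<le> integral UNIV (annulus_kernel n e)"
  proof (rule integral_le)
    show "(\<lambda>z. ?m * indicator ?B z) integrable_on UNIV"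
      by (intro integrable_on_mult_right) (simp add: integrable_on_indicator)
    show "?m * indicator ?B z \<le> annulus_kernel n e z" for z
      using annulus_kernel_lower_bound_near_peak[OF assms, of z n] annulus_kernel_nonneg[of n e z]
      by (simp add: indicator_def)
  qed (rule integrable_annulus_kernel)
  finally show ?thesis .
qed

lemma integral_annulus_kernel_pos:
  fixes e :: "'a::euclidean_space"
  assumes "norm e = 1"
  shows "0 < integral UNIV (annulus_kernel n e)"
proof -
  have "0 < measure lborel (cball (0::'a) (1/8)) / 4 * exp (- 2 * real n * (1/8))"
    by simp
  also have "\<dots> \<le> integral UNIV (annulus_kernel n e)"
    using integral_annulus_kernel_lower_bound[OF assms, of "1/8" n] by simp
  finally show ?thesis .
qed

section \<open>Concentration of the annulus kernel\<close>

lemma annulus_kernel_deviation_bound: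
  fixes f :: "'a::real_inner \<Rightarrow> real"
  assumes bound: "\<And>u. u \<in> sphere 0 1 \<Longrightarrow> \<bar>f u\<bar> \<le> M"
    and near: "\<And>u. u \<in> sphere 0 1 \<Longrightarrow> dist u x < \<eta> \<Longrightarrow> \<bar>f u - f x\<bar> \<le> \<epsilon>"
    and x: "x \<in> sphere 0 1" and "0 \<le> \<epsilon>" "0 \<le> \<eta>"
  shows "\<bar>(f (sgn z) - f x) * annulus_kernel n x z\<bar>
    \<le> \<epsilon> * annulus_kernel n x z + 2 * M * exp (- real n * \<eta>\<^sup>2 / 2) * annulus_bump (norm z)"
proof -
  have "0 \<le> M"
    using bound[OF x] by linarith
  consider "annulus_bump (norm z) = 0" | "1 < norm z"
    using annulus_bump_eq_0[of "norm z"] by fastforce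
  then show ?thesis
  proof cases
    case 1
    then show ?thesis
      using \<open>0 \<le> M\<close> by (simp add: annulus_kernel_def)
  next
    case 2
    then have s: "sgn z \<in> sphere 0 1"
      by (auto simp: norm_sgn)
    have k: "0 \<le> annulus_kernel n x z" "0 \<le> annulus_bump (norm z)"
      by (simp_all add: annulus_kernel_nonneg annulus_bump_nonneg)
    show ?thesis
    proof (cases "dist (sgn z) x < \<eta>")
      case True
      then have "\<bar>(f (sgn z) - f x) * annulus_kernel n x z\<bar> \<le> \<epsilon> * annulus_kernel n x z"
        using near[OF s] k by (simp add: abs_mult mult_right_mono)
      then show ?thesis
        using \<open>0 \<le> M\<close> k by (smt (verit) mult_nonneg_nonneg exp_gt_zero)
    next
      case False
      have "\<bar>f (sgn z) - f x\<bar> * exp (real n * (x \<bullet> sgn z - 1)) \<le> 2 * M * exp (- real n * \<eta>\<^sup>2 / 2)"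
        using bound[OF s] bound[OF x] exp_inner_unit_vectors_le[of "sgn z" x \<eta> n] s x False \<open>0 \<le> \<eta>\<close>
        by (intro mult_mono) auto
      then have "\<bar>(f (sgn z) - f x) * annulus_kernel n x z\<bar>
          \<le> 2 * M * exp (- real n * \<eta>\<^sup>2 / 2) * annulus_bump (norm z)"
        using k by (simp add: annulus_kernel_def abs_mult mult_left_mono mult.commute mult.left_commute)
      then show ?thesis
        using \<open>0 \<le> \<epsilon>\<close> k by (smt (verit) mult_nonneg_nonneg)
    qed
  qed
qed

lemma annulus_kernel_integral_deviation_bound:
  fixes f :: "'a::euclidean_space \<Rightarrow> real"
  assumes f: "continuous_on (sphere 0 1) f"
    and bound: "\<And>u. u \<in> sphere 0 1 \<Longrightarrow> \<bar>f u\<bar> \<le> M"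
    and near: "\<And>u. u \<in> sphere 0 1 \<Longrightarrow> dist u x < \<eta> \<Longrightarrow> \<bar>f u - f x\<bar> \<le> \<epsilon>"
    and x: "x \<in> sphere 0 1" and "0 \<le> \<epsilon>" "0 \<le> \<eta>"
  shows "\<bar>integral UNIV (\<lambda>z. f (sgn z) * annulus_kernel n x z) - f x * integral UNIV (annulus_kernel n x)\<bar>
    \<le> \<epsilon> * integral UNIV (annulus_kernel n x)
       + 2 * M * exp (- real n * \<eta>\<^sup>2 / 2) * integral UNIV (\<lambda>z::'a. annulus_bump (norm z))"
proof -
  let ?k = "annulus_kernel n x"
  let ?C = "2 * M * exp (- real n * \<eta>\<^sup>2 / 2)"
  have fk: "(\<lambda>z. f (sgn z) * ?k z) integrable_on UNIV"
    by (rule integrable_annulus_kernel_section[OF f])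
  have k: "(\<lambda>z. c * ?k z) integrable_on UNIV" for c
    by (rule integrable_on_mult_right[OF integrable_annulus_kernel])
  have b: "(\<lambda>z::'a. c * annulus_bump (norm z)) integrable_on UNIV" for c
    by (rule integrable_on_mult_right[OF integrable_annulus_bump_norm])
  have "integral UNIV (\<lambda>z. f (sgn z) * ?k z) - f x * integral UNIV ?k
      = integral UNIV (\<lambda>z. (f (sgn z) - f x) * ?k z)"
    using integral_diff[OF fk k] by (simp add: left_diff_distrib integral_mult_right)
  also have "\<bar>\<dots>\<bar> \<le> integral UNIV (\<lambda>z. \<epsilon> * ?k z + ?C * annulus_bump (norm z))"
    unfolding real_norm_def[symmetric]
  proof (rule integral_norm_bound_integral)
    show "(\<lambda>z. (f (sgn z) - f x) * ?k z) integrable_on UNIV"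
      using integrable_diff[OF fk k] by (simp add: left_diff_distrib)
    show "(\<lambda>z. \<epsilon> * ?k z + ?C * annulus_bump (norm z)) integrable_on UNIV"
      by (rule integrable_add[OF k b])
    show "norm ((f (sgn z) - f x) * ?k z) \<le> \<epsilon> * ?k z + ?C * annulus_bump (norm z)" for z
      using annulus_kernel_deviation_bound[of f M x \<eta> \<epsilon> z n] bound near x assms(5,6)
      by (simp add: mult.assoc)
  qed
  also have "\<dots> = \<epsilon> * integral UNIV ?k + ?C * integral UNIV (\<lambda>z::'a. annulus_bump (norm z))"
    using integral_add[OF k b] by (simp add: integral_mult_right)
  finally show ?thesis .
qed

lemma annulus_kernel_concentration:
  fixes f :: "'a::euclidean_space \<Rightarrow> real"
  assumes f: "continuous_on (sphere 0 1) f" and bound: "\<And>u. u \<in> sphere 0 1 \<Longrightarrow> \<bar>f u\<bar> \<le> M"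
    and near: "\<And>u x. u \<in> sphere 0 1 \<Longrightarrow> x \<in> sphere 0 1 \<Longrightarrow> dist u x < \<eta> \<Longrightarrow> \<bar>f u - f x\<bar> \<le> \<epsilon>"
    and "0 \<le> \<epsilon>" "0 < \<eta>" "\<eta> \<le> 1"
  obtains C where "\<And>n x. x \<in> sphere 0 1 \<Longrightarrow>
    \<bar>integral UNIV (\<lambda>z. f (sgn z) * annulus_kernel n x z) - f x * integral UNIV (annulus_kernel n x)\<bar>
      \<le> (\<epsilon> + C * exp (- real n * \<eta>\<^sup>2 / 4)) * integral UNIV (annulus_kernel n x)"
proof
  define \<rho> where "\<rho> = \<eta>\<^sup>2 / 8"
  define c0 where "c0 = measure lborel (cball (0::'a) \<rho>) / 4"
  define W where "W = integral UNIV (\<lambda>z::'a. annulus_bump (norm z))"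
  fix n x
  assume x: "x \<in> sphere (0::'a) 1"
  have \<rho>: "0 < \<rho>" "\<rho> \<le> 1/8"
    using \<open>0 < \<eta>\<close> \<open>\<eta> \<le> 1\<close> by (auto simp: \<rho>_def power_le_one)
  then have "0 < c0"
    by (simp add: c0_def)
  have "0 \<le> M" "0 \<le> W"
    using bound[OF x] integral_nonneg[OF integrable_annulus_bump_norm annulus_bump_nonneg]
    by (auto simp: W_def)
  have "exp (- real n * \<eta>\<^sup>2 / 2) = exp (- real n * \<eta>\<^sup>2 / 4) * exp (- 2 * real n * \<rho>)"
    by (simp add: \<rho>_def flip: exp_add)
  then have "2 * M * exp (- real n * \<eta>\<^sup>2 / 2) * W
      = 2 * M * W / c0 * exp (- real n * \<eta>\<^sup>2 / 4) * (c0 * exp (- 2 * real n * \<rho>))"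
    using \<open>0 < c0\<close> by simp
  also have "\<dots> \<le> 2 * M * W / c0 * exp (- real n * \<eta>\<^sup>2 / 4) * integral UNIV (annulus_kernel n x)"
    using integral_annulus_kernel_lower_bound[of x \<rho> n] x \<rho> \<open>0 < c0\<close> \<open>0 \<le> M\<close> \<open>0 \<le> W\<close>
    by (intro mult_left_mono) (auto simp: c0_def)
  finally show "\<bar>integral UNIV (\<lambda>z. f (sgn z) * annulus_kernel n x z) - f x * integral UNIV (annulus_kernel n x)\<bar>
      \<le> (\<epsilon> + 2 * M * W / c0 * exp (- real n * \<eta>\<^sup>2 / 4)) * integral UNIV (annulus_kernel n x)"
    using annulus_kernel_integral_deviation_bound[of f M x \<eta> \<epsilon> n] f bound near[OF _ x] x assms(4,5)
    unfolding W_def by (simp add: distrib_right)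
qed

lemma eventually_mult_exp_neg_less:
  assumes "0 < a" "0 < \<epsilon>"
  shows "eventually (\<lambda>n::nat. C * exp (- real n * a) < \<epsilon>) sequentially"
proof -
  have "(\<lambda>n. exp (- a) ^ n) \<longlonglongrightarrow> 0"
    using assms(1) by (intro LIMSEQ_power_zero) auto
  then have "(\<lambda>n. C * exp (- real n * a)) \<longlonglongrightarrow> 0"
    by (intro tendsto_mult_right_zero) (simp add: exp_of_nat_mult[symmetric] mult.commute)
  then show ?thesis
    using assms(2) by (rule order_tendstoD(2))
qed

lemma annulus_kernel_concentration_uniform:
  fixes f :: "'a::euclidean_space \<Rightarrow> real"
  assumes f: "continuous_on (sphere 0 1) f" and "0 < \<epsilon>"
  obtains n :: nat where "0 < n" "\<And>x. x \<in> sphere 0 1 \<Longrightarrow>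
    \<bar>integral UNIV (\<lambda>z. f (sgn z) * annulus_kernel n x z) - f x * integral UNIV (annulus_kernel n x)\<bar>
      \<le> \<epsilon> * integral UNIV (annulus_kernel n x)"
proof -
  have "bounded (f ` sphere 0 1)"
    using compact_continuous_image[OF f compact_sphere] by (rule compact_imp_bounded)
  then obtain M where "\<forall>v\<in>f ` sphere 0 1. norm v \<le> M"
    unfolding bounded_iff by blast
  then have bound: "\<And>u. u \<in> sphere 0 1 \<Longrightarrow> \<bar>f u\<bar> \<le> M"
    by simp
  have "uniformly_continuous_on (sphere 0 1) f"
    using f by (intro compact_uniformly_continuous) auto
  then obtain \<eta>0 where "0 < \<eta>0" and \<eta>0: "\<And>u x. x \<in> sphere 0 1 \<Longrightarrow> u \<in> sphere 0 1 \<Longrightarrow>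
      dist u x < \<eta>0 \<Longrightarrow> dist (f u) (f x) < \<epsilon> / 2"
    unfolding uniformly_continuous_on_def using \<open>0 < \<epsilon>\<close> by (metis half_gt_zero)
  define \<eta> where "\<eta> = min \<eta>0 1"
  have "0 < \<eta>" "\<eta> \<le> 1"
    using \<open>0 < \<eta>0\<close> by (auto simp: \<eta>_def)
  have near: "\<bar>f u - f x\<bar> \<le> \<epsilon> / 2" if "u \<in> sphere 0 1" "x \<in> sphere 0 1" "dist u x < \<eta>" for u x
    using \<eta>0[OF that(2,1)] that(3) by (simp add: \<eta>_def dist_real_def)
  have "0 \<le> \<epsilon> / 2"
    using \<open>0 < \<epsilon>\<close> by simp
  then obtain C where C: "\<And>n x. x \<in> sphere 0 1 \<Longrightarrow>
      \<bar>integral UNIV (\<lambda>z. f (sgn z) * annulus_kernel n x z) - f x * integral UNIV (annulus_kernel n x)\<bar>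
        \<le> (\<epsilon> / 2 + C * exp (- real n * \<eta>\<^sup>2 / 4)) * integral UNIV (annulus_kernel n x)"
    using annulus_kernel_concentration[OF f bound near _ \<open>0 < \<eta>\<close> \<open>\<eta> \<le> 1\<close>] by blast
  have "eventually (\<lambda>n. 0 < n \<and> C * exp (- real n * (\<eta>\<^sup>2 / 4)) < \<epsilon> / 2) sequentially"
    using \<open>0 < \<epsilon>\<close> \<open>0 < \<eta>\<close> by (intro eventually_conj eventually_gt_at_top eventually_mult_exp_neg_less) auto
  then obtain n :: nat where "0 < n" and n: "C * exp (- real n * \<eta>\<^sup>2 / 4) < \<epsilon> / 2"
    by (auto simp: eventually_sequentially)
  have "(\<epsilon> / 2 + C * exp (- real n * \<eta>\<^sup>2 / 4)) * integral UNIV (annulus_kernel n x)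
      \<le> \<epsilon> * integral UNIV (annulus_kernel n x)" if "x \<in> sphere 0 1" for x
    using n integral_annulus_kernel_pos[of x n] that by (intro mult_right_mono) auto
  then show thesis
    using that[OF \<open>0 < n\<close>] C order_trans by blast
qed

section \<open>Approximation by exponential sums\<close>

definition approx_by_exp_sums :: "nat \<Rightarrow> real \<Rightarrow> ('a::real_inner \<Rightarrow> real) \<Rightarrow> bool" where
  "approx_by_exp_sums n \<epsilon> f \<longleftrightarrow> (\<exists>N>0. \<exists>(y :: nat \<Rightarrow> 'a) (c :: nat \<Rightarrow> real).
     (\<forall>k\<in>{1..N}. y k \<in> sphere 0 1) \<and>
     (\<forall>x\<in>sphere 0 1. \<bar>f x - (\<Sum>k=1..N. c k * exp (real n * (x \<bullet> y k)))\<bar> \<le> \<epsilon>))"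

lemma approx_by_exp_sums_finite_index:
  fixes y :: "'i \<Rightarrow> 'a::real_inner"
  assumes "finite P" "P \<noteq> {}" "\<And>q. q \<in> P \<Longrightarrow> y q \<in> sphere 0 1"
    and "\<And>x. x \<in> sphere 0 1 \<Longrightarrow> \<bar>f x - (\<Sum>q\<in>P. c q * exp (real n * (x \<bullet> y q)))\<bar> \<le> \<epsilon>"
  shows "approx_by_exp_sums n \<epsilon> f"
proof -
  obtain g where g: "bij_betw g {1..card P} P"
    using ex_bij_betw_nat_finite_1[OF assms(1)] by blast
  have "(\<Sum>k=1..card P. c (g k) * exp (real n * (x \<bullet> y (g k)))) = (\<Sum>q\<in>P. c q * exp (real n * (x \<bullet> y q)))"
    for x
    using sum.reindex_bij_betw[OF g, of "\<lambda>q. c q * exp (real n * (x \<bullet> y q))"] by simp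
  moreover have "y (g k) \<in> sphere 0 1" if "k \<in> {1..card P}" for k
    using assms(3) bij_betwE[OF g] that by blast
  moreover have "0 < card P"
    using assms(1,2) by (simp add: card_gt_0_iff)
  ultimately show ?thesis
    unfolding approx_by_exp_sums_def using assms(4)
    by (intro exI[of _ "card P"] exI[of _ "\<lambda>k. y (g k)"] exI[of _ "\<lambda>k. c (g k)"] conjI ballI) auto
qed

lemma approx_by_exp_sums_wellorder:
  fixes f :: "real^'n::{finite,wellorder} \<Rightarrow> real"
  assumes f: "continuous_on (sphere 0 1) f" and "0 < \<epsilon>"
  obtains n where "0 < n" "approx_by_exp_sums n \<epsilon> f"
proof -
  let ?S = "sphere (0::real^'n::_) 1"
  let ?B = "cbox (- (2 *\<^sub>R One)) (2 *\<^sub>R One) :: (real^'n::_) set"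
  define e :: "real^'n::_" where "e = axis undefined 1"
  have e: "e \<in> ?S"
    by (simp add: e_def)
  obtain n where "0 < n" and conc: "\<And>x. x \<in> ?S \<Longrightarrow>
      \<bar>integral UNIV (\<lambda>z. f (sgn z) * annulus_kernel n x z) - f x * integral UNIV (annulus_kernel n x)\<bar>
        \<le> \<epsilon> / 2 * integral UNIV (annulus_kernel n x)"
    using annulus_kernel_concentration_uniform[OF f half_gt_zero[OF \<open>0 < \<epsilon>\<close>]] by blast
  define D where "D = integral UNIV (annulus_kernel n e)"
  have D: "integral UNIV (annulus_kernel n x) = D" if "x \<in> ?S" for x
    using integral_annulus_kernel_sphere_invariant[of x e n] that e by (simp add: D_def)
  have "0 < D"
    using integral_annulus_kernel_pos e by (simp add: D_def)
  have cont: "continuous_on (?S \<times> ?B) (\<lambda>p. f (sgn (snd p)) * annulus_kernel n (fst p) (snd p))"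
    using continuous_on_annulus_kernel_pair[OF f] by (rule continuous_on_subset) simp
  have "0 < \<epsilon> / 2 * D"
    using \<open>0 < \<epsilon>\<close> \<open>0 < D\<close> by simp
  then obtain p where p: "p tagged_division_of ?B" and riemann: "\<And>x. x \<in> ?S \<Longrightarrow>
      \<bar>integral ?B (\<lambda>z. f (sgn z) * annulus_kernel n x z)
        - (\<Sum>(t, K)\<in>p. measure lborel K * (f (sgn t) * annulus_kernel n x t))\<bar> \<le> \<epsilon> / 2 * D"
    using uniform_riemann_sum_approximation[OF compact_sphere cont, unfolded prod.sel] by blast
  have "0 \<in> ?B"
    by (simp add: mem_box)
  then have "p \<noteq> {}"
    using tagged_division_ofD(6)[OF p] by auto
  define y :: "real^'n::_ \<Rightarrow> real^'n::_" where "y t = (if t = 0 then e else sgn t)" for t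
  define c :: "(real^'n::_) \<times> (real^'n::_) set \<Rightarrow> real" where
    "c q = measure lborel (snd q) * f (sgn (fst q)) * annulus_bump (norm (fst q)) * exp (- real n) / D" for q
  have "annulus_kernel n x t = annulus_bump (norm t) * exp (- real n) * exp (real n * (x \<bullet> y t))" for x t
    using annulus_bump_eq_0[of 0] by (auto simp: annulus_kernel_def y_def right_diff_distrib simp flip: exp_add)
  then have summand: "measure lborel (snd q) * (f (sgn (fst q)) * annulus_kernel n x (fst q)) / D
      = c q * exp (real n * (x \<bullet> y (fst q)))" for x q
    by (simp add: c_def)
  have "\<bar>f x - (\<Sum>q\<in>p. c q * exp (real n * (x \<bullet> y (fst q))))\<bar> \<le> \<epsilon>" if x: "x \<in> ?S" for x
  proof -
    let ?R = "\<Sum>(t, K)\<in>p. measure lborel K * (f (sgn t) * annulus_kernel n x t)"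
    have "\<bar>f x * D - ?R\<bar> \<le> \<epsilon> * D"
      using conc[OF x] riemann[OF x] unfolding integral_annulus_kernel_section_cube[OF f] D[OF x]
      by linarith
    moreover have "f x - (\<Sum>q\<in>p. c q * exp (real n * (x \<bullet> y (fst q)))) = (f x * D - ?R) / D"
      using \<open>0 < D\<close> by (simp add: diff_divide_distrib sum_divide_distrib case_prod_unfold summand)
    ultimately show ?thesis
      using \<open>0 < D\<close> by (simp add: abs_divide pos_divide_le_eq)
  qed
  moreover have "y (fst q) \<in> ?S" for q
    using e by (simp add: y_def norm_sgn)
  ultimately have "approx_by_exp_sums n \<epsilon> f"
    by (intro approx_by_exp_sums_finite_index[OF tagged_division_of_finite[OF p] \<open>p \<noteq> {}\<close>,
        where y="\<lambda>q. y (fst q)" and c=c])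
  then show thesis
    using \<open>0 < n\<close> that by blast
qed

(* The change-of-variables theorem behind integral_comp_orthogonal_transformation needs an index
   type of sort wellorder; ord_index is one of the same cardinality as an arbitrary finite type. *)
typedef ('a::finite) ord_index = "{..<CARD('a)}"
  by (rule exI[of _ 0]) (simp add: card_gt_0_iff)

lemma card_ord_index: "CARD('a::finite ord_index) = CARD('a)"
  using type_definition.card[OF type_definition_ord_index] by simp

instance ord_index :: (finite) finite
proof
  have "(UNIV :: 'a ord_index set) = Abs_ord_index ` {..<CARD('a)}"
    using type_definition.univ[OF type_definition_ord_index] .
  then show "finite (UNIV :: 'a ord_index set)"
    by (metis finite_imageI finite_lessThan)
qed

instantiation ord_index :: (finite) linorder
begin

definition less_eq_ord_index :: "'a ord_index \<Rightarrow> 'a ord_index \<Rightarrow> bool" where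
  "i \<le> j \<longleftrightarrow> Rep_ord_index i \<le> Rep_ord_index j"

definition less_ord_index :: "'a ord_index \<Rightarrow> 'a ord_index \<Rightarrow> bool" where
  "i < j \<longleftrightarrow> Rep_ord_index i < Rep_ord_index j"

instance
  by standard (auto simp: less_eq_ord_index_def less_ord_index_def Rep_ord_index_inject)

end

instance ord_index :: (finite) wellorder
proof
  fix P :: "'a ord_index \<Rightarrow> bool" and a :: "'a ord_index"
  assume step: "\<And>i. (\<And>j. j < i \<Longrightarrow> P j) \<Longrightarrow> P i"
  have "\<And>i. Rep_ord_index i = k \<Longrightarrow> P i" for k
  proof (induction k rule: less_induct)
    case (less k)
    show ?case
      by (rule step) (use less in \<open>auto simp: less_ord_index_def\<close>)
  qed
  then show "P a"
    by blast
qed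

lemma vec_isometry_of_card_eq:
  assumes "CARD('a::finite) = CARD('b::finite)"
  obtains Q :: "real^'b \<Rightarrow> real^'a" where "bij Q" "continuous_on UNIV Q" "\<And>x y. Q x \<bullet> Q y = x \<bullet> y"
proof -
  obtain \<sigma> :: "'a \<Rightarrow> 'b" where \<sigma>: "bij \<sigma>"
    using finite_same_card_bij[of "UNIV :: 'a set" "UNIV :: 'b set"] assms by auto
  define Q :: "real^'b \<Rightarrow> real^'a" where "Q y = (\<chi> i. y $ \<sigma> i)" for y
  define P :: "real^'a \<Rightarrow> real^'b" where "P x = (\<chi> j. x $ inv \<sigma> j)" for x
  have "inv \<sigma> (\<sigma> i) = i" "\<sigma> (inv \<sigma> j) = j" for i j
    using \<sigma> by (simp_all add: bij_is_inj bij_is_surj surj_f_inv_f)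
  then have "P \<circ> Q = id" "Q \<circ> P = id"
    by (simp_all add: P_def Q_def vec_eq_iff fun_eq_iff)
  then have "bij Q"
    by (rule o_bij)
  have "linear Q"
    by (rule linearI) (simp_all add: Q_def vec_eq_iff)
  then have "continuous_on UNIV Q"
    by (simp add: linear_continuous_on linear_conv_bounded_linear)
  have "Q x \<bullet> Q y = x \<bullet> y" for x y
    using sum.reindex_bij_betw[OF \<sigma>, of "\<lambda>j. x $ j * y $ j"] by (simp add: inner_vec_def Q_def)
  then show thesis
    using \<open>bij Q\<close> \<open>continuous_on UNIV Q\<close> that by blast
qed

lemma approx_by_exp_sums_cart:
  fixes f :: "real^'n \<Rightarrow> real"
  assumes f: "continuous_on (sphere 0 1) f" and "0 < \<epsilon>"
  obtains n where "0 < n" "approx_by_exp_sums n \<epsilon> f"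
proof -
  obtain Q :: "real^'n ord_index \<Rightarrow> real^'n" where "bij Q" "continuous_on UNIV Q"
    and inner: "\<And>x y. Q x \<bullet> Q y = x \<bullet> y"
    using vec_isometry_of_card_eq[OF card_ord_index[symmetric]] by blast
  have norm: "norm (Q x) = norm x" for x
    using inner[of x x] by (simp add: norm_eq_sqrt_inner)
  have "continuous_on (sphere 0 1) Q"
    using \<open>continuous_on UNIV Q\<close> by (rule continuous_on_subset) simp
  moreover have "Q ` sphere 0 1 \<subseteq> sphere 0 1"
    by (auto simp: norm)
  ultimately have fQ: "continuous_on (sphere 0 1) (f \<circ> Q)"
    using continuous_on_compose continuous_on_subset[OF f] by blast
  obtain n where "0 < n" and "approx_by_exp_sums n \<epsilon> (f \<circ> Q)"
    using approx_by_exp_sums_wellorder[OF fQ \<open>0 < \<epsilon>\<close>] by blast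
  then obtain N :: nat and y c where "0 < N" and y: "\<forall>k\<in>{1..N}. y k \<in> sphere 0 1"
    and approx: "\<forall>x\<in>sphere 0 1. \<bar>f (Q x) - (\<Sum>k=1..N. c k * exp (real n * (x \<bullet> y k)))\<bar> \<le> \<epsilon>"
    unfolding approx_by_exp_sums_def comp_def by blast
  have "\<bar>f x - (\<Sum>k=1..N. c k * exp (real n * (x \<bullet> Q (y k))))\<bar> \<le> \<epsilon>" if "x \<in> sphere 0 1" for x
  proof -
    have x: "Q (inv Q x) = x"
      using \<open>bij Q\<close> by (simp add: bij_is_surj surj_f_inv_f)
    then have "inv Q x \<in> sphere 0 1"
      using that norm[of "inv Q x"] by simp
    then have "\<bar>f (Q (inv Q x)) - (\<Sum>k=1..N. c k * exp (real n * (inv Q x \<bullet> y k)))\<bar> \<le> \<epsilon>"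
      using approx by blast
    then show ?thesis
      using inner[of "inv Q x"] x by simp
  qed
  moreover have "\<forall>k\<in>{1..N}. Q (y k) \<in> sphere 0 1"
    using y by (simp add: norm)
  ultimately have "approx_by_exp_sums n \<epsilon> f"
    unfolding approx_by_exp_sums_def using \<open>0 < N\<close>
    by (intro exI[of _ N] exI[of _ "\<lambda>k. Q (y k)"] exI[of _ c] conjI) auto
  then show thesis
    using \<open>0 < n\<close> that by blast
qed

section \<open>Positivity of the von Mises--Fisher constant\<close>

definition besselI_term :: "real \<Rightarrow> real \<Rightarrow> nat \<Rightarrow> real" where
  "besselI_term v x k = (x / 2) powr (2 * real k + v) / (fact k * Gamma (real k + v + 1))"

lemma besselI_eq_suminf: "besselI v x = (\<Sum>k. besselI_term v x k)"
  by (simp add: besselI_def besselI_term_def)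

lemma besselI_term_pos: "0 \<le> v \<Longrightarrow> 0 < x \<Longrightarrow> 0 < besselI_term v x k"
  by (simp add: besselI_term_def Gamma_real_pos)

lemma besselI_term_Suc:
  assumes "0 \<le> v" "0 < x"
  shows "besselI_term v x (Suc k) = besselI_term v x k * ((x / 2)\<^sup>2 / ((real k + 1) * (real k + v + 1)))"
proof -
  have powr: "(x / 2) powr (2 * real (Suc k) + v) = (x / 2) powr (2 * real k + v) * (x / 2)\<^sup>2"
    using assms by (simp add: powr_add powr_realpow algebra_simps)
  have fact: "fact (Suc k) = (real k + 1) * fact k"
    by (simp add: algebra_simps)
  have "real k + v + 1 \<notin> \<int>\<^sub>\<le>\<^sub>0"
    using assms nonpos_Ints_nonpos by fastforce
  then have Gamma: "Gamma (real (Suc k) + v + 1) = (real k + v + 1) * Gamma (real k + v + 1)"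
    using Gamma_plus1[of "real k + v + 1"] by (simp add: add_ac)
  show ?thesis
    unfolding besselI_term_def powr fact Gamma
    using Gamma_real_pos[of "real k + v + 1"] assms by (simp add: field_simps)
qed

lemma summable_besselI_term:
  assumes "0 \<le> v" "0 < x"
  shows "summable (besselI_term v x)"
proof (rule summable_ratio_test[where c="1/2" and N="nat \<lceil>2 * (x / 2)\<^sup>2\<rceil>"])
  fix k
  assume "nat \<lceil>2 * (x / 2)\<^sup>2\<rceil> \<le> k"
  then have "2 * (x / 2)\<^sup>2 \<le> real k"
    using real_nat_ceiling_ge[of "2 * (x / 2)\<^sup>2"] of_nat_mono by fastforce
  also have "\<dots> \<le> (real k + 1) * 1"
    by simp
  also have "\<dots> \<le> (real k + 1) * (real k + v + 1)"
    using assms by (intro mult_left_mono) auto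
  finally have "(x / 2)\<^sup>2 \<le> 1/2 * ((real k + 1) * (real k + v + 1))"
    by linarith
  moreover have denom: "0 < (real k + 1) * (real k + v + 1)"
    using assms by simp
  ultimately have "(x / 2)\<^sup>2 / ((real k + 1) * (real k + v + 1)) \<le> 1/2"
    by (simp add: pos_divide_le_eq)
  then have "besselI_term v x k * ((x / 2)\<^sup>2 / ((real k + 1) * (real k + v + 1))) \<le> besselI_term v x k * (1/2)"
    using besselI_term_pos[OF assms, of k] by (intro mult_left_mono) auto
  then show "norm (besselI_term v x (Suc k)) \<le> 1/2 * norm (besselI_term v x k)"
    using besselI_term_pos[OF assms, of k] besselI_term_pos[OF assms, of "Suc k"] denom
    by (simp add: besselI_term_Suc[OF assms] abs_of_pos del: mult_le_cancel_left_pos)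
qed simp

lemma besselI_pos: "0 \<le> v \<Longrightarrow> 0 < x \<Longrightarrow> 0 < besselI v x"
  unfolding besselI_eq_suminf by (intro suminf_pos summable_besselI_term besselI_term_pos)

lemma vmf_const_pos: "2 \<le> d \<Longrightarrow> 0 < \<kappa> \<Longrightarrow> 0 < vmf_const d \<kappa>"
  by (simp add: vmf_const_def besselI_pos)

theorem lemma4:
  fixes f :: "real ^ 'd \<Rightarrow> real"
  assumes "CARD('d) \<ge> 2"
    and "continuous_on (sphere 0 1) f"
    and "\<exists>x\<in>sphere 0 1. f x \<noteq> 0"
    and "\<delta> > 0"
  shows "\<exists>n N :: nat. n > 0 \<and> N > 0 \<and>
           (\<exists>y :: nat \<Rightarrow> real ^ 'd. \<exists>c :: nat \<Rightarrow> real.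
              (\<forall>k\<in>{1..N}. y k \<in> sphere 0 1) \<and>
              (SUP x\<in>sphere 0 1. \<bar>f x - (\<Sum>k=1..N. c k * vmf_kernel CARD('d) n (x \<bullet> y k))\<bar>) < \<delta>)"
proof -
  obtain n where "0 < n" and "approx_by_exp_sums n (\<delta> / 2) f"
    using approx_by_exp_sums_cart[OF assms(2) half_gt_zero[OF assms(4)]] by blast
  then obtain N :: nat and y c where "0 < N" and y: "\<forall>k\<in>{1..N}. y k \<in> sphere 0 1"
    and approx: "\<forall>x\<in>sphere 0 1. \<bar>f x - (\<Sum>k=1..N. c k * exp (real n * (x \<bullet> y k)))\<bar> \<le> \<delta> / 2"
    unfolding approx_by_exp_sums_def by blast
  define \<kappa> where "\<kappa> = vmf_const CARD('d) (real n)"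
  have "0 < \<kappa>"
    using assms(1) \<open>0 < n\<close> by (simp add: \<kappa>_def vmf_const_pos)
  then have "(\<Sum>k=1..N. c k / \<kappa> * vmf_kernel CARD('d) n (x \<bullet> y k)) = (\<Sum>k=1..N. c k * exp (real n * (x \<bullet> y k)))"
    for x
    by (simp add: vmf_kernel_def \<kappa>_def)
  moreover have "axis undefined 1 \<in> sphere (0::real^'d) 1"
    by simp
  ultimately have "(SUP x\<in>sphere 0 1. \<bar>f x - (\<Sum>k=1..N. c k / \<kappa> * vmf_kernel CARD('d) n (x \<bullet> y k))\<bar>) \<le> \<delta> / 2"
    using approx by (intro cSUP_least) auto
  then show ?thesis
    using \<open>0 < n\<close> \<open>0 < N\<close> y assms(4)
    by (intro exI[of _ n] exI[of _ N] exI[of _ y] exI[of _ "\<lambda>k. c k / \<kappa>"] conjI) auto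
qed

end
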